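(* For every $n\ge 3$, $\beta(P_{2\infty}\,\Box\, C_n)=3$ if $n$ is odd and $\beta(P_{2\infty}\,\Box\, C_n)=4$ if $n$ is even. Moreover, $\{(0,0),(0,\tfrac{n-1}{2}),(1,0)\}$ is a metric basis of $P_{2\infty}\,\Box\, C_n$ when $n$ is odd, and $\{(0,0),(0,\tfrac n2),(0,1),(1,0)\}$ is a metric basis when $n$ is even.
   Context: $P_{2\infty}$ has vertex set $\mathbb Z$ with $i,j$ adjacent iff $|i-j|=1$. $C_n$ has vertex set $\{0,1,\dots,n-1\}$, with $0\le i\le j\le n-1$ adjacent iff $j-i=1$ or $j-i=n-1$. The cartesian product $G\Box H$ has vertex set $V(G)\times V(H)$, where $(a,v)$ is adjacent to $(b,w)$ iff either $a=b$ and $vw\in E(H)$, or $v=w$ and $ab\in E(G)$. A vertex $x$ resolves $u,v$ if $d(u,x)\ne d(v,x)$ (shortest-path distance); a resolving set is a set of vertices resolving every pair of distinct vertices; $\beta$ is the minimum cardinality of a resolving set ($\infty$ if none is finite), and a metric basis is a resolving set of cardinality $\beta$. *)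

theory Defs
  imports Main "HOL-Library.Extended_Nat"
begin

text \<open>A graph is given by a vertex set V and an adjacency relation E (used only on V).\<close>

definition walk :: "'a set \<Rightarrow> ('a \<Rightarrow> 'a \<Rightarrow> bool) \<Rightarrow> 'a list \<Rightarrow> bool" where
  "walk V E xs \<longleftrightarrow> xs \<noteq> [] \<and> set xs \<subseteq> V \<and>
     (\<forall>i. Suc i < length xs \<longrightarrow> E (xs ! i) (xs ! Suc i))"

text \<open>Shortest-path distance (number of edges); \<infinity> if no path exists.\<close>
definition gdist :: "'a set \<Rightarrow> ('a \<Rightarrow> 'a \<Rightarrow> bool) \<Rightarrow> 'a \<Rightarrow> 'a \<Rightarrow> enat" where
  "gdist V E u v = (INF xs \<in> {xs. walk V E xs \<and> hd xs = u \<and> last xs = v}. enat (length xs - 1))"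

definition resolves :: "'a set \<Rightarrow> ('a \<Rightarrow> 'a \<Rightarrow> bool) \<Rightarrow> 'a \<Rightarrow> 'a \<Rightarrow> 'a \<Rightarrow> bool" where
  "resolves V E x u v \<longleftrightarrow> gdist V E u x \<noteq> gdist V E v x"

definition resolving_set :: "'a set \<Rightarrow> ('a \<Rightarrow> 'a \<Rightarrow> bool) \<Rightarrow> 'a set \<Rightarrow> bool" where
  "resolving_set V E W \<longleftrightarrow> W \<subseteq> V \<and>
     (\<forall>u\<in>V. \<forall>v\<in>V. u \<noteq> v \<longrightarrow> (\<exists>x\<in>W. resolves V E x u v))"

definition metric_dim :: "'a set \<Rightarrow> ('a \<Rightarrow> 'a \<Rightarrow> bool) \<Rightarrow> enat" where
  "metric_dim V E = Inf {enat (card W) | W. finite W \<and> resolving_set V E W}"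

definition metric_basis :: "'a set \<Rightarrow> ('a \<Rightarrow> 'a \<Rightarrow> bool) \<Rightarrow> 'a set \<Rightarrow> bool" where
  "metric_basis V E W \<longleftrightarrow> resolving_set V E W \<and> finite W \<and> enat (card W) = metric_dim V E"

definition P2inf_adj :: "int \<Rightarrow> int \<Rightarrow> bool" where
  "P2inf_adj i j \<longleftrightarrow> \<bar>i - j\<bar> = 1"

definition cycle_V :: "nat \<Rightarrow> nat set" where
  "cycle_V n = {0..<n}"

definition cycle_adj :: "nat \<Rightarrow> nat \<Rightarrow> nat \<Rightarrow> bool" where
  "cycle_adj n i j \<longleftrightarrow> i < n \<and> j < n \<and>
     (max i j - min i j = 1 \<or> max i j - min i j = n - 1)"

definition box_adj :: "('a \<Rightarrow> 'a \<Rightarrow> bool) \<Rightarrow> ('b \<Rightarrow> 'b \<Rightarrow> bool) \<Rightarrow> 'a \<times> 'b \<Rightarrow> 'a \<times> 'b \<Rightarrow> bool" where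
  "box_adj EG EH p q \<longleftrightarrow>
     (fst p = fst q \<and> EH (snd p) (snd q)) \<or> (snd p = snd q \<and> EG (fst p) (fst q))"

definition PC_V :: "nat \<Rightarrow> (int \<times> nat) set" where
  "PC_V n = UNIV \<times> cycle_V n"

definition PC_adj :: "nat \<Rightarrow> int \<times> nat \<Rightarrow> int \<times> nat \<Rightarrow> bool" where
  "PC_adj n = box_adj P2inf_adj (cycle_adj n)"

end

theory Submission
  imports Defs
begin

(* The proof works entirely with an explicit distance function.  The distance in C_n is
   cdist n i j = min |i - j| (n - |i - j|), and the graph distance in P_{2\<infinity>} \<box> C_n is
   pdist n (a,i) (b,j) = |a - b| + cdist n i j: one bound holds because every edge changes
   pdist by at most one, the other by walking greedily towards the target.

   Upper bounds: the proposed sets resolve, by elementary computations on the cycle.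
   Lower bounds: for any two vertices (any n \<ge> 3), and for any three vertices when n is
   even, we exhibit two distinct vertices that are equidistant from all of them.  For
   three vertices sorted by their first coordinate this is a case analysis on how
   close their cycle coordinates are.  The main tool is a "diagonal" pair (a,i), (a+1,i+1):
   it is not distinguished by vertices in columns \<le> a whose row gets closer under the
   step i \<rightarrow> i+1, nor by vertices in columns > a whose row gets farther away. *)

section \<open>Distance on the cycle\<close>

definition cdist :: "nat \<Rightarrow> nat \<Rightarrow> nat \<Rightarrow> int" where
  "cdist n i j = min \<bar>int i - int j\<bar> (int n - \<bar>int i - int j\<bar>)"

lemma cdist_nonneg: "i < n \<Longrightarrow> j < n \<Longrightarrow> cdist n i j \<ge> 0"
  unfolding cdist_def by auto

lemma cdist_eq_0_iff: "i < n \<Longrightarrow> j < n \<Longrightarrow> cdist n i j = 0 \<longleftrightarrow> i = j"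
  unfolding cdist_def by auto

lemma cdist_sym: "cdist n i j = cdist n j i"
  unfolding cdist_def by auto

lemma cdist_adj_le: "cycle_adj n i i' \<Longrightarrow> k < n \<Longrightarrow> cdist n i k \<le> cdist n i' k + 1"
  unfolding cdist_def cycle_adj_def by (auto simp: max_def min_def abs_if split: if_splits)

lemma cdist_adj: "n \<ge> 3 \<Longrightarrow> cycle_adj n i j \<Longrightarrow> cdist n i j = 1"
  unfolding cycle_adj_def cdist_def by (auto simp: max_def min_def split: if_splits)

lemma cdist_step_toward:
  assumes "i < n" "j < n" "i \<noteq> j" "n \<ge> 3"
  shows "\<exists>i'<n. cycle_adj n i i' \<and> cdist n i' j = cdist n i j - 1"
proof (cases "i < j")
  case True
  show ?thesis
  proof (cases "2*(j - i) \<le> n")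
    case True
    then show ?thesis using \<open>i<j\<close> assms
      by (intro exI[of _ "i+1"]) (auto simp: cdist_def cycle_adj_def)
  next
    case False
    then show ?thesis using \<open>i<j\<close> assms
      by (intro exI[of _ "if i = 0 then n - 1 else i - 1"]) (auto simp: cdist_def cycle_adj_def)
  qed
next
  case False
  show ?thesis
  proof (cases "2*(i - j) \<le> n")
    case True
    then show ?thesis using \<open>\<not> i<j\<close> assms
      by (intro exI[of _ "i-1"]) (auto simp: cdist_def cycle_adj_def)
  next
    case False
    then show ?thesis using \<open>\<not> i<j\<close> assms
      by (intro exI[of _ "if i = n - 1 then 0 else i + 1"]) (auto simp: cdist_def cycle_adj_def)
  qed
qed

definition cnext :: "nat \<Rightarrow> nat \<Rightarrow> nat" where "cnext n i = (if i + 1 = n then 0 else i + 1)"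
definition cprev :: "nat \<Rightarrow> nat \<Rightarrow> nat" where "cprev n i = (if i = 0 then n - 1 else i - 1)"

lemma cnext_lt: "i < n \<Longrightarrow> cnext n i < n" unfolding cnext_def by auto
lemma cprev_lt: "i < n \<Longrightarrow> cprev n i < n" unfolding cprev_def by auto
lemma cnext_neq_cprev: "n \<ge> 3 \<Longrightarrow> i < n \<Longrightarrow> cnext n i \<noteq> cprev n i" unfolding cnext_def cprev_def by auto
lemma cnext_cprev: "i < n \<Longrightarrow> cnext n (cprev n i) = i" unfolding cnext_def cprev_def by auto

lemma cdist_cnext: "n \<ge> 3 \<Longrightarrow> i < n \<Longrightarrow> cdist n (cnext n i) i = 1"
  unfolding cnext_def cdist_def by auto
lemma cdist_cprev: "n \<ge> 3 \<Longrightarrow> i < n \<Longrightarrow> cdist n (cprev n i) i = 1"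
  unfolding cprev_def cdist_def by auto

section \<open>The distance formula for the cylinder\<close>

definition pdist :: "nat \<Rightarrow> int \<times> nat \<Rightarrow> int \<times> nat \<Rightarrow> int" where
  "pdist n p q = \<bar>fst p - fst q\<bar> + cdist n (snd p) (snd q)"

lemma PC_V_iff: "p \<in> PC_V n \<longleftrightarrow> snd p < n"
  unfolding PC_V_def cycle_V_def by (cases p) auto

lemma pdist_nonneg: "snd p < n \<Longrightarrow> snd q < n \<Longrightarrow> pdist n p q \<ge> 0"
  unfolding pdist_def using cdist_nonneg by (simp add: add_nonneg_nonneg)

lemma walk_single: "walk V E [x] \<longleftrightarrow> x \<in> V"
  unfolding walk_def by auto

lemma walk_Cons2: "walk V E (x # y # ys) \<longleftrightarrow> x \<in> V \<and> E x y \<and> walk V E (y # ys)"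
proof
  assume w: "walk V E (x # y # ys)"
  have "\<forall>i. Suc i < length (y#ys) \<longrightarrow> E ((y#ys) ! i) ((y#ys) ! Suc i)"
  proof (intro allI impI)
    fix i assume "Suc i < length (y#ys)"
    then have "Suc (Suc i) < length (x#y#ys)" by simp
    with w have "E ((x#y#ys) ! Suc i) ((x#y#ys) ! Suc (Suc i))" unfolding walk_def by blast
    then show "E ((y#ys) ! i) ((y#ys) ! Suc i)" by simp
  qed
  moreover have "E x y" using w unfolding walk_def by force
  ultimately show "x \<in> V \<and> E x y \<and> walk V E (y # ys)" using w unfolding walk_def by auto
next
  assume h: "x \<in> V \<and> E x y \<and> walk V E (y # ys)"
  show "walk V E (x # y # ys)" unfolding walk_def
  proof (intro conjI allI impI)
    show "set (x # y # ys) \<subseteq> V" using h unfolding walk_def by auto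
  next
    fix i assume "Suc i < length (x#y#ys)"
    then show "E ((x # y # ys) ! i) ((x # y # ys) ! Suc i)"
      using h unfolding walk_def by (cases i) auto
  qed simp
qed

lemma pdist_adj_le:
  assumes "PC_adj n p q" "snd v < n"
  shows "pdist n p v \<le> pdist n q v + 1"
proof -
  obtain a i b j where pq: "p = (a,i)" "q = (b,j)" by (cases p, cases q)
  from assms(1) consider "a = b" "cycle_adj n i j" | "i = j" "\<bar>a - b\<bar> = 1"
    unfolding pq PC_adj_def box_adj_def P2inf_adj_def by auto
  then show ?thesis
  proof cases
    case 1
    then show ?thesis using cdist_adj_le[OF 1(2) assms(2)] unfolding pq pdist_def by simp
  next
    case 2
    then show ?thesis unfolding pq pdist_def by auto
  qed
qed

lemma pdist_le_walk_length:
  "walk (PC_V n) (PC_adj n) xs \<Longrightarrow> snd v < n \<Longrightarrow>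
     pdist n (hd xs) v \<le> int (length xs - 1) + pdist n (last xs) v"
proof (induction xs rule: induct_list012)
  case 1 then show ?case by (simp add: walk_def)
next
  case (2 x) then show ?case by simp
next
  case (3 x y zs)
  have w: "PC_adj n x y" "walk (PC_V n) (PC_adj n) (y # zs)"
    using "3.prems"(1) walk_Cons2 by metis+
  have "pdist n x v \<le> pdist n y v + 1" using pdist_adj_le[OF w(1) "3.prems"(2)] .
  moreover have "pdist n y v \<le> int (length (y#zs) - 1) + pdist n (last (y#zs)) v"
    using "3.IH"(2)[OF w(2) "3.prems"(2)] by simp
  ultimately show ?case by simp
qed

lemma pdist_step_toward:
  assumes "n \<ge> 3" "snd u < n" "snd v < n" "pdist n u v = int (Suc k)"
  shows "\<exists>u'. snd u' < n \<and> PC_adj n u u' \<and> pdist n u' v = int k"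
proof -
  obtain a i b j where uv: "u = (a,i)" "v = (b,j)" by (cases u, cases v)
  show ?thesis
  proof (cases "a = b")
    case True
    have "i \<noteq> j"
    proof
      assume "i = j"
      then have "pdist n u v = 0" using True uv unfolding pdist_def cdist_def by simp
      then show False using assms(4) by simp
    qed
    then obtain i' where "i' < n" "cycle_adj n i i'" "cdist n i' j = cdist n i j - 1"
      using cdist_step_toward[of i n j] assms uv by auto
    then show ?thesis using True uv assms(4)
      by (intro exI[of _ "(a,i')"]) (simp add: pdist_def PC_adj_def box_adj_def)
  next
    case False
    define a' where "a' = (if a < b then a + 1 else a - 1)"
    have "\<bar>a' - b\<bar> = \<bar>a - b\<bar> - 1" "\<bar>a - a'\<bar> = 1" using False unfolding a'_def by auto
    then show ?thesis using uv assms
      by (intro exI[of _ "(a',i)"]) (simp add: pdist_def PC_adj_def box_adj_def P2inf_adj_def)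
  qed
qed

lemma walk_of_length_pdist:
  assumes "n \<ge> 3" "snd u < n" "snd v < n" "pdist n u v = int k"
  shows "\<exists>xs. walk (PC_V n) (PC_adj n) xs \<and> hd xs = u \<and> last xs = v \<and> length xs = k + 1"
  using assms(2,4)
proof (induction k arbitrary: u)
  case 0
  obtain a i b j where uv: "u = (a,i)" "v = (b,j)" by (cases u, cases v)
  have "a = b" "cdist n i j = 0"
    using cdist_nonneg[of i n j] 0 assms(3) uv unfolding pdist_def by auto
  then have "u = v" using cdist_eq_0_iff[of i n j] 0(1) assms(3) uv by simp
  then show ?case using 0 by (intro exI[of _ "[u]"]) (simp add: walk_single PC_V_iff)
next
  case (Suc k)
  obtain u' where u': "snd u' < n" "PC_adj n u u'" "pdist n u' v = int k"
    using pdist_step_toward[OF assms(1) Suc.prems(1) assms(3) Suc.prems(2)] by blast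
  from Suc.IH[OF u'(1,3)] obtain xs where
    xs: "walk (PC_V n) (PC_adj n) xs" "hd xs = u'" "last xs = v" "length xs = k + 1" by blast
  then obtain ys where ys: "xs = u' # ys" by (cases xs) auto
  have "walk (PC_V n) (PC_adj n) (u # xs)"
    using xs(1) ys u'(2) Suc.prems(1) by (simp add: walk_Cons2 PC_V_iff)
  then show ?case using xs ys by (intro exI[of _ "u # xs"]) simp
qed

theorem gdist_PC:
  assumes "n \<ge> 3" "snd u < n" "snd v < n"
  shows "gdist (PC_V n) (PC_adj n) u v = enat (nat (pdist n u v))"
proof -
  let ?S = "{xs. walk (PC_V n) (PC_adj n) xs \<and> hd xs = u \<and> last xs = v}"
  obtain k where k: "pdist n u v = int k"
    using pdist_nonneg[OF assms(2,3)] nonneg_int_cases by blast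
  obtain xs where xs: "xs \<in> ?S" "length xs = k + 1"
    using walk_of_length_pdist[OF assms k] by auto
  have "gdist (PC_V n) (PC_adj n) u v \<le> enat k"
    unfolding gdist_def using xs by (intro INF_lower2[of xs]) auto
  moreover have "enat k \<le> gdist (PC_V n) (PC_adj n) u v"
    unfolding gdist_def
  proof (rule INF_greatest)
    fix ys assume "ys \<in> ?S"
    then have "pdist n u v \<le> int (length ys - 1) + pdist n v v"
      using pdist_le_walk_length[of n ys v] assms by auto
    then show "enat k \<le> enat (length ys - 1)" using k by (simp add: pdist_def cdist_def)
  qed
  ultimately show ?thesis using k by simp
qed

corollary resolves_iff_pdist:
  assumes "n \<ge> 3" "snd u < n" "snd v < n" "snd x < n"
  shows "resolves (PC_V n) (PC_adj n) x u v \<longleftrightarrow> pdist n u x \<noteq> pdist n v x"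
  using gdist_PC[OF assms(1,2,4)] gdist_PC[OF assms(1,3,4)]
    pdist_nonneg[of u n x] pdist_nonneg[of v n x] assms
  unfolding resolves_def by auto

lemma metric_dim_eqI:
  assumes "finite B" "resolving_set V E B" "card B = k"
    "\<And>W. finite W \<Longrightarrow> resolving_set V E W \<Longrightarrow> card W \<ge> k"
  shows "metric_dim V E = enat k" "metric_basis V E B"
proof -
  show "metric_dim V E = enat k"
    unfolding metric_dim_def
  proof (rule antisym)
    show "Inf {enat (card W) |W. finite W \<and> resolving_set V E W} \<le> enat k"
      by (rule Inf_lower) (use assms in auto)
    show "enat k \<le> Inf {enat (card W) |W. finite W \<and> resolving_set V E W}"
      by (rule Inf_greatest) (use assms(4) in auto)
  qed
  then show "metric_basis V E B" using assms unfolding metric_basis_def by auto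
qed

lemma cover_by_list:
  assumes "finite W" "card W \<le> k" "W \<subseteq> A" "z \<in> A"
  shows "\<exists>xs. length xs = k \<and> set xs \<subseteq> A \<and> W \<subseteq> set xs"
proof -
  obtain ys where ys: "set ys = W" "distinct ys" using finite_distinct_list[OF assms(1)] by blast
  then have "length ys \<le> k" using assms(2) distinct_card by metis
  then show ?thesis using ys assms(3,4)
    by (intro exI[of _ "ys @ replicate (k - length ys) z"]) auto
qed

section \<open>Upper bounds: the proposed bases resolve\<close>

lemma int_eq_from_abs: "\<bar>a::int\<bar> = \<bar>b\<bar> \<Longrightarrow> \<bar>a\<bar> - \<bar>a - 1\<bar> = \<bar>b\<bar> - \<bar>b - 1\<bar> \<Longrightarrow> a = b"
  by arith

lemma odd_cycle_profile_inj:
  assumes "n = 2*m+1" "i < n" "j < n"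
    "cdist n i 0 - cdist n i m = cdist n j 0 - cdist n j m"
  shows "i = j"
  using assms unfolding cdist_def by (auto simp: min_def abs_if split: if_splits) presburger+

text \<open>Columns are told apart by (0,0) versus (1,0), rows by (0,0) versus (0,m).\<close>
lemma odd_basis_resolving:
  assumes "n = 2*m+1" "m \<ge> 1"
  shows "resolving_set (PC_V n) (PC_adj n) {(0,0),(0,m),(1,0)}"
  unfolding resolving_set_def
proof (intro conjI ballI impI)
  have n3: "n \<ge> 3" using assms by auto
  show "{(0,0),(0,m),(1,0)} \<subseteq> PC_V n" using assms by (auto simp: PC_V_iff)
  fix u v assume uv: "u \<in> PC_V n" "v \<in> PC_V n" "u \<noteq> v"
  obtain a i b j where e: "u = (a,i)" "v = (b,j)" by (cases u, cases v)
  have ij: "i < n" "j < n" using uv e unfolding PC_V_iff by auto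
  show "\<exists>x\<in>{(0,0),(0,m),(1,0)}. resolves (PC_V n) (PC_adj n) x u v"
  proof (rule ccontr)
    assume "\<not> ?thesis"
    then have "pdist n u (0,0) = pdist n v (0,0)" "pdist n u (0,m) = pdist n v (0,m)"
        "pdist n u (1,0) = pdist n v (1,0)"
      using resolves_iff_pdist[OF n3] uv assms unfolding PC_V_iff by auto
    then have q: "\<bar>a\<bar> + cdist n i 0 = \<bar>b\<bar> + cdist n j 0" "\<bar>a\<bar> + cdist n i m = \<bar>b\<bar> + cdist n j m"
        "\<bar>a - 1\<bar> + cdist n i 0 = \<bar>b - 1\<bar> + cdist n j 0"
      unfolding e pdist_def by auto
    have "i = j" using odd_cycle_profile_inj[OF assms(1) ij] q by linarith
    then have "\<bar>a\<bar> = \<bar>b\<bar>" "\<bar>a\<bar> - \<bar>a - 1\<bar> = \<bar>b\<bar> - \<bar>b - 1\<bar>" using q by auto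
    then have "a = b" by (rule int_eq_from_abs)
    then show False using \<open>i = j\<close> e uv by simp
  qed
qed

lemma even_cycle_profile_inj:
  assumes "n = 2*m" "m \<ge> 2" "i < n" "j < n" "cdist n i 0 = cdist n j 0" "cdist n i 1 = cdist n j 1"
  shows "i = j"
  using assms unfolding cdist_def by (auto simp: min_def abs_if split: if_splits)

lemma even_cycle_antipodal_sum:
  assumes "n = 2*m" "i < n"
  shows "cdist n i 0 + cdist n i m = int m"
  using assms unfolding cdist_def by (auto simp: min_def abs_if split: if_splits)

text \<open>(0,0) and (0,m) fix the column up to sign, (1,0) the sign, (0,1) the row.\<close>
lemma even_basis_resolving:
  assumes "n = 2*m" "m \<ge> 2"
  shows "resolving_set (PC_V n) (PC_adj n) {(0,0),(0,m),(0,1),(1,0)}"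
  unfolding resolving_set_def
proof (intro conjI ballI impI)
  have n3: "n \<ge> 3" using assms by auto
  show "{(0,0),(0,m),(0,1),(1,0)} \<subseteq> PC_V n" using assms by (auto simp: PC_V_iff)
  fix u v assume uv: "u \<in> PC_V n" "v \<in> PC_V n" "u \<noteq> v"
  obtain a i b j where e: "u = (a,i)" "v = (b,j)" by (cases u, cases v)
  have ij: "i < n" "j < n" using uv e unfolding PC_V_iff by auto
  show "\<exists>x\<in>{(0,0),(0,m),(0,1),(1,0)}. resolves (PC_V n) (PC_adj n) x u v"
  proof (rule ccontr)
    assume "\<not> ?thesis"
    then have "pdist n u (0,0) = pdist n v (0,0)" "pdist n u (0,m) = pdist n v (0,m)"
        "pdist n u (0,1) = pdist n v (0,1)" "pdist n u (1,0) = pdist n v (1,0)"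
      using resolves_iff_pdist[OF n3] uv assms unfolding PC_V_iff by auto
    then have q: "\<bar>a\<bar> + cdist n i 0 = \<bar>b\<bar> + cdist n j 0" "\<bar>a\<bar> + cdist n i m = \<bar>b\<bar> + cdist n j m"
        "\<bar>a\<bar> + cdist n i 1 = \<bar>b\<bar> + cdist n j 1" "\<bar>a - 1\<bar> + cdist n i 0 = \<bar>b - 1\<bar> + cdist n j 0"
      unfolding e pdist_def by auto
    have s: "cdist n i 0 + cdist n i m = int m" "cdist n j 0 + cdist n j m = int m"
      using even_cycle_antipodal_sum[OF assms(1)] ij by auto
    have a: "\<bar>a\<bar> = \<bar>b\<bar>" and i0: "cdist n i 0 = cdist n j 0" using q s by linarith+
    then have "\<bar>a\<bar> - \<bar>a - 1\<bar> = \<bar>b\<bar> - \<bar>b - 1\<bar>" using q by linarith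
    with a have "a = b" by (rule int_eq_from_abs)
    then have "cdist n i 1 = cdist n j 1" using q by simp
    then have "i = j" using even_cycle_profile_inj[OF assms ij i0] by blast
    then show False using \<open>a = b\<close> e uv by simp
  qed
qed

section \<open>Lower bounds: equidistant pairs\<close>

definition equidistant :: "nat \<Rightarrow> (int \<times> nat) set \<Rightarrow> int \<times> nat \<Rightarrow> int \<times> nat \<Rightarrow> bool" where
  "equidistant n W u v \<longleftrightarrow> u \<noteq> v \<and> snd u < n \<and> snd v < n \<and> (\<forall>w\<in>W. pdist n u w = pdist n v w)"

lemma equidistant_not_resolving:
  assumes "n \<ge> 3" "equidistant n S u v" "W \<subseteq> S"
  shows "\<not> resolving_set (PC_V n) (PC_adj n) W"
proof
  assume res: "resolving_set (PC_V n) (PC_adj n) W"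
  have uv: "u \<in> PC_V n" "v \<in> PC_V n" "u \<noteq> v" using assms(2) unfolding equidistant_def PC_V_iff by auto
  then obtain x where x: "x \<in> W" "resolves (PC_V n) (PC_adj n) x u v"
    using res unfolding resolving_set_def by blast
  have "x \<in> PC_V n" using x(1) res unfolding resolving_set_def by auto
  then have "pdist n u x \<noteq> pdist n v x"
    using resolves_iff_pdist[OF assms(1)] x(2) uv unfolding PC_V_iff by auto
  moreover have "pdist n u x = pdist n v x" using assms(2,3) x(1) unfolding equidistant_def by auto
  ultimately show False by simp
qed

lemma equidistant_column:
  assumes "n \<ge> 3" "\<forall>w\<in>W. fst w = x"
  shows "equidistant n W (x-1,0) (x+1,0)"
  using assms unfolding equidistant_def pdist_def by auto

lemma equidistant_two_sorted:
  assumes "n \<ge> 3" "snd p < n" "snd q < n" "fst p < fst q"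
  shows "\<exists>u v. equidistant n {p,q} u v"
proof -
  obtain x1 j1 x2 j2 where pq: "p = (x1,j1)" "q = (x2,j2)" by (cases p, cases q)
  show ?thesis
  proof (cases "j1 = j2")
    case True
    have "equidistant n {p,q} (x1, cnext n j1) (x1, cprev n j1)"
      unfolding equidistant_def using True pq assms cnext_neq_cprev[of n j1] cnext_lt[of j1 n]
        cprev_lt[of j1 n] cdist_cnext[of n j1] cdist_cprev[of n j1] by (auto simp: pdist_def)
    then show ?thesis by blast
  next
    case False
    text \<open>Trade one step towards q on the cycle for one step towards q on the path.\<close>
    then obtain j' where j': "j' < n" "cycle_adj n j1 j'" "cdist n j' j2 = cdist n j1 j2 - 1"
      using cdist_step_toward[of j1 n j2] assms pq by auto
    have "cdist n j' j1 = 1" using cdist_adj[OF assms(1) j'(2)] cdist_sym by metis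
    then have "equidistant n {p,q} (x1, j') (x1+1, j1)"
      unfolding equidistant_def using pq assms j' by (auto simp: pdist_def cdist_def)
    then show ?thesis by blast
  qed
qed

lemma equidistant_two:
  assumes "n \<ge> 3" "snd p < n" "snd q < n"
  shows "\<exists>u v. equidistant n {p,q} u v"
proof -
  consider "fst p = fst q" | "fst p < fst q" | "fst q < fst p" by linarith
  then show ?thesis
  proof cases
    case 1 then show ?thesis using equidistant_column[OF assms(1), of "{p,q}" "fst p"] by auto
  next
    case 2 then show ?thesis using equidistant_two_sorted assms by blast
  next
    case 3 then show ?thesis using equidistant_two_sorted[OF assms(1,3,2)] by (simp add: insert_commute)
  qed
qed

theorem card_resolving_ge_3:
  assumes "n \<ge> 3" "finite W" "resolving_set (PC_V n) (PC_adj n) W"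
  shows "card W \<ge> 3"
proof (rule ccontr)
  assume "\<not> card W \<ge> 3"
  moreover have "W \<subseteq> PC_V n" "(0,0) \<in> PC_V n"
    using assms unfolding resolving_set_def PC_V_iff by auto
  ultimately obtain xs where xs: "length xs = 2" "set xs \<subseteq> PC_V n" "W \<subseteq> set xs"
    using cover_by_list[OF assms(2), of 2 "PC_V n" "(0,0)"] by fastforce
  then obtain p q where pq: "xs = [p,q]" by (auto simp: numeral_2_eq_2 length_Suc_conv)
  then have "snd p < n" "snd q < n" using xs(2) by (auto simp: PC_V_iff)
  then obtain u v where "equidistant n {p,q} u v" using equidistant_two[OF assms(1)] by blast
  then show False using equidistant_not_resolving[OF assms(1)] xs(3) pq assms(3) by auto
qed

section \<open>Lower bound for even cycles: no three vertices resolve\<close>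

definition antipode :: "nat \<Rightarrow> nat \<Rightarrow> nat" where
  "antipode n i = (if i < n div 2 then i + n div 2 else i - n div 2)"
definition approaches :: "nat \<Rightarrow> nat \<Rightarrow> nat \<Rightarrow> bool" where
  "approaches n i j \<longleftrightarrow> cdist n (cnext n i) j + 1 = cdist n i j"

lemma antipode_lt: "i < n \<Longrightarrow> antipode n i < n" unfolding antipode_def by auto
lemma cnext_antipode: "n = 2*m \<Longrightarrow> m \<ge> 2 \<Longrightarrow> i < n \<Longrightarrow> cnext n (antipode n i) = antipode n (cnext n i)"
  unfolding cnext_def antipode_def by auto

lemma cdist_le_half: "n = 2*m \<Longrightarrow> i < n \<Longrightarrow> j < n \<Longrightarrow> cdist n i j \<le> int m"
  unfolding cdist_def by auto

lemma cdist_eq_half: "n = 2*m \<Longrightarrow> i < n \<Longrightarrow> j < n \<Longrightarrow> cdist n i j = int m \<Longrightarrow> j = antipode n i"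
  unfolding cdist_def antipode_def by (auto simp: min_def abs_if split: if_splits)

lemma cdist_antipode: "n = 2*m \<Longrightarrow> i < n \<Longrightarrow> j < n \<Longrightarrow> cdist n i (antipode n j) + cdist n i j = int m"
  unfolding cdist_def antipode_def by (auto simp: min_def abs_if split: if_splits)

lemma cdist_next_antipode: "n = 2*m \<Longrightarrow> m \<ge> 2 \<Longrightarrow> j < n \<Longrightarrow> cdist n (cnext n j) (antipode n j) = int m - 1"
  unfolding cdist_def cnext_def antipode_def by (auto simp: min_def abs_if split: if_splits)

lemma cdist_prev_antipode: "n = 2*m \<Longrightarrow> m \<ge> 2 \<Longrightarrow> j < n \<Longrightarrow> cdist n (cprev n j) (antipode n j) = int m - 1"
  unfolding cdist_def cprev_def antipode_def by (auto simp: min_def abs_if split: if_splits)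

lemma approaches_or_recedes: "n = 2*m \<Longrightarrow> m \<ge> 2 \<Longrightarrow> i < n \<Longrightarrow> j < n \<Longrightarrow>
   cdist n (cnext n i) j = cdist n i j + 1 \<or> approaches n i j"
  unfolding approaches_def cdist_def cnext_def by (auto simp: min_def abs_if split: if_splits) presburger+

lemma approaches_antipode:
  assumes "n = 2*m" "m \<ge> 2" "i < n" "j < n"
  shows "approaches n (antipode n i) j \<longleftrightarrow> \<not> approaches n i j"
proof -
  have e1: "cdist n (antipode n i) j = int m - cdist n i j"
    using cdist_antipode[OF assms(1) assms(4) assms(3)] cdist_sym by (metis add_diff_cancel_right')
  have e2: "cdist n (antipode n (cnext n i)) j = int m - cdist n (cnext n i) j"
    using cdist_antipode[OF assms(1) assms(4) cnext_lt[OF assms(3)]] cdist_sym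
    by (metis add_diff_cancel_right')
  have "approaches n (antipode n i) j \<longleftrightarrow> cdist n (cnext n i) j = cdist n i j + 1"
    unfolding approaches_def cnext_antipode[OF assms(1-3)] e1 e2 by linarith
  then show ?thesis using approaches_or_recedes[OF assms] unfolding approaches_def by linarith
qed

text \<open>If b lies less than half way round the cycle ahead of a, the step arriving at a
  approaches both a and b.\<close>
lemma common_approach_oriented:
  assumes "n = 2*m" "m \<ge> 2" "a < n" "b < n" "(a \<le> b \<and> b - a < m) \<or> (b < a \<and> a - b > m)"
  shows "approaches n (cprev n a) a \<and> approaches n (cprev n a) b"
  unfolding approaches_def cnext_cprev[OF assms(3)]
  using assms unfolding cprev_def cdist_def by (auto simp: min_def abs_if split: if_splits)

lemma common_approach:
  assumes "n = 2*m" "m \<ge> 2" "a < n" "b < n" "cdist n a b < int m"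
  shows "\<exists>i<n. approaches n i a \<and> approaches n i b"
proof (cases "(a \<le> b \<and> b - a < m) \<or> (b < a \<and> a - b > m)")
  case True
  then show ?thesis using common_approach_oriented[OF assms(1-4)] cprev_lt[OF assms(3)] by blast
next
  case False
  then have "(b \<le> a \<and> a - b < m) \<or> (a < b \<and> b - a > m)"
    using assms unfolding cdist_def by (auto simp: min_def split: if_splits)
  then show ?thesis using common_approach_oriented[OF assms(1,2,4,3)] cprev_lt[OF assms(4)] by blast
qed

lemma equidistant_diagonal:
  assumes "n = 2*m" "m \<ge> 2" "i < n"
    "\<forall>w\<in>W. snd w < n \<and> (fst w \<le> a \<longrightarrow> approaches n i (snd w)) \<and> (fst w > a \<longrightarrow> \<not> approaches n i (snd w))"
  shows "equidistant n W (a,i) (a+1, cnext n i)"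
  unfolding equidistant_def
proof (intro conjI ballI)
  show "snd (a, i) < n" "snd (a+1, cnext n i) < n" using assms cnext_lt by auto
  fix w assume w: "w \<in> W"
  obtain x j where wx: "w = (x,j)" by (cases w)
  have j: "j < n" using assms(4) w wx by auto
  show "pdist n (a, i) w = pdist n (a + 1, cnext n i) w"
  proof (cases "x \<le> a")
    case True
    then have "approaches n i j" using assms(4) w wx by auto
    then show ?thesis using True unfolding wx pdist_def approaches_def by simp
  next
    case False
    then have "\<not> approaches n i j" using assms(4) w wx by auto
    then have "cdist n (cnext n i) j = cdist n i j + 1" using approaches_or_recedes[OF assms(1-3) j] by simp
    then show ?thesis using False unfolding wx pdist_def by simp
  qed
qed simp

lemma equidistant_antipodal_rows:
  assumes "n = 2*m" "m \<ge> 2" "k < n" "\<forall>w\<in>W. snd w = k \<or> snd w = antipode n k"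
  shows "equidistant n W (x, cnext n k) (x, cprev n k)"
  unfolding equidistant_def
proof (intro conjI ballI)
  have n3: "n \<ge> 3" using assms by auto
  show "(x, cnext n k) \<noteq> (x, cprev n k)" using cnext_neq_cprev[OF n3 assms(3)] by auto
  show "snd (x, cnext n k) < n" "snd (x, cprev n k) < n" using assms cnext_lt cprev_lt by auto
  fix w assume "w \<in> W"
  then show "pdist n (x, cnext n k) w = pdist n (x, cprev n k) w"
    using assms(4) cdist_cnext[OF n3 assms(3)] cdist_cprev[OF n3 assms(3)]
      cdist_next_antipode[OF assms(1-3)] cdist_prev_antipode[OF assms(1-3)]
    unfolding pdist_def by auto
qed

lemma cdist_next_prev_diff: "n = 2*m \<Longrightarrow> m \<ge> 2 \<Longrightarrow> j < n \<Longrightarrow> k < n \<Longrightarrow>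
  cdist n (cnext n j) k - cdist n (cprev n j) k \<in> {-2, 0, 2}"
  unfolding cdist_def cnext_def cprev_def by (auto simp: min_def abs_if split: if_splits) presburger+

text \<open>An antipodal pair in one column together with a vertex in another column: shift the
  two cycle neighbours of j horizontally in opposite directions to balance the third vertex.\<close>
lemma equidistant_antipodal_column:
  assumes "n = 2*m" "m \<ge> 2" "j < n" "k < n" "y \<noteq> x"
  shows "\<exists>u v. equidistant n {(x,j), (x, antipode n j), (y,k)} u v"
proof -
  have n3: "n \<ge> 3" using assms by auto
  define \<delta> where "\<delta> = cdist n (cnext n j) k - cdist n (cprev n j) k"
  have \<delta>: "\<delta> \<in> {-2,0,2}" unfolding \<delta>_def using cdist_next_prev_diff[OF assms(1-4)] .
  define t :: int where "t = (if \<delta> = 0 then 0 else if (\<delta> = 2) = (y > x) then 1 else -1)"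
  have c1: "cdist n (cnext n j) j = 1" "cdist n (cprev n j) j = 1"
    using cdist_cnext[OF n3 assms(3)] cdist_cprev[OF n3 assms(3)] by auto
  have c2: "cdist n (cnext n j) (antipode n j) = cdist n (cprev n j) (antipode n j)"
    using cdist_next_antipode[OF assms(1,2,3)] cdist_prev_antipode[OF assms(1,2,3)] by auto
  have c3: "\<bar>x + t - y\<bar> + cdist n (cnext n j) k = \<bar>x - t - y\<bar> + cdist n (cprev n j) k"
    using \<delta> assms(5) unfolding t_def \<delta>_def by auto
  have "equidistant n {(x,j), (x, antipode n j), (y,k)} (x + t, cnext n j) (x - t, cprev n j)"
    unfolding equidistant_def
    using cnext_neq_cprev[OF n3 assms(3)] cnext_lt[OF assms(3)] cprev_lt[OF assms(3)]
      c1 c2 c3 by (auto simp: pdist_def)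
  then show ?thesis by blast
qed

text \<open>If the first is strictly left of the
  second and the rows of the last two are not antipodal, a common approaching step i for
  these two rows (or its antipode, if i does not approach the first row) yields a
  diagonal pair.\<close>
lemma equidistant_three_close_right:
  assumes "n = 2*m" "m \<ge> 2" "j1 < n" "j2 < n" "j3 < n"
    "x1 < x2" "x2 \<le> x3" "cdist n j2 j3 < int m"
  shows "\<exists>u v. equidistant n {(x1,j1),(x2,j2),(x3,j3)} u v"
proof -
  obtain i where i: "i < n" "approaches n i j2" "approaches n i j3"
    using common_approach[OF assms(1,2,4,5,8)] by blast
  show ?thesis
  proof (cases "approaches n i j1")
    case True
    have "equidistant n {(x1,j1),(x2,j2),(x3,j3)} (x3,i) (x3+1, cnext n i)"
      by (rule equidistant_diagonal[OF assms(1,2) i(1)]) (use assms i True in auto)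
    then show ?thesis by blast
  next
    case False
    have a: "antipode n i < n" using antipode_lt i by auto
    have "approaches n (antipode n i) j1" "\<not> approaches n (antipode n i) j2"
      "\<not> approaches n (antipode n i) j3"
      using approaches_antipode[OF assms(1,2) i(1)] assms i False by auto
    then have "equidistant n {(x1,j1),(x2,j2),(x3,j3)} (x1, antipode n i) (x1+1, cnext n (antipode n i))"
      by (intro equidistant_diagonal[OF assms(1,2) a]) (use assms in auto)
    then show ?thesis by blast
  qed
qed

lemma equidistant_three_close_left:
  assumes "n = 2*m" "m \<ge> 2" "j1 < n" "j2 < n" "j3 < n"
    "x1 \<le> x2" "x2 < x3" "cdist n j1 j2 < int m"
  shows "\<exists>u v. equidistant n {(x1,j1),(x2,j2),(x3,j3)} u v"
proof -
  obtain i where i: "i < n" "approaches n i j1" "approaches n i j2"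
    using common_approach[OF assms(1,2,3,4,8)] by blast
  show ?thesis
  proof (cases "approaches n i j3")
    case True
    have "equidistant n {(x1,j1),(x2,j2),(x3,j3)} (x3,i) (x3+1, cnext n i)"
      by (rule equidistant_diagonal[OF assms(1,2) i(1)]) (use assms i True in auto)
    then show ?thesis by blast
  next
    case False
    have "equidistant n {(x1,j1),(x2,j2),(x3,j3)} (x2,i) (x2+1, cnext n i)"
      by (rule equidistant_diagonal[OF assms(1,2) i(1)]) (use assms i False in auto)
    then show ?thesis by blast
  qed
qed

lemma equidistant_three_far:
  assumes "n = 2*m" "m \<ge> 2" "j1 < n" "j2 < n" "j3 < n" "x1 \<le> x2" "x2 \<le> x3" "x1 < x3"
    and far_right: "x1 < x2 \<Longrightarrow> cdist n j2 j3 = int m"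
    and far_left: "x2 < x3 \<Longrightarrow> cdist n j1 j2 = int m"
  shows "\<exists>u v. equidistant n {(x1,j1),(x2,j2),(x3,j3)} u v"
proof -
  consider "x1 = x2" "x2 < x3" | "x1 < x2" "x2 = x3" | "x1 < x2" "x2 < x3"
    using assms(6-8) by linarith
  then show ?thesis
  proof cases
    case 1
    then have "j2 = antipode n j1" using far_left cdist_eq_half[OF assms(1,3,4)] by simp
    then show ?thesis using equidistant_antipodal_column[OF assms(1,2,3,5), of x3 x1] 1 by auto
  next
    case 2
    then have "j3 = antipode n j2" using far_right cdist_eq_half[OF assms(1,4,5)] by simp
    then have "{(x1,j1),(x2,j2),(x3,j3)} = {(x2,j2), (x2, antipode n j2), (x1,j1)}" using 2 by auto
    then show ?thesis using equidistant_antipodal_column[OF assms(1,2,4,3), of x1 x2] 2 by auto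
  next
    case 3
    then have "j3 = antipode n j2" "j1 = antipode n j2"
      using far_left far_right cdist_eq_half[OF assms(1,4,5)] cdist_eq_half[OF assms(1,4,3)]
      by (simp_all add: cdist_sym)
    then have "\<forall>w\<in>{(x1,j1),(x2,j2),(x3,j3)}. snd w = j2 \<or> snd w = antipode n j2" by auto
    then show ?thesis using equidistant_antipodal_rows[OF assms(1,2,4)] by blast
  qed
qed

lemma equidistant_three_sorted:
  assumes "n = 2*m" "m \<ge> 2" "snd p < n" "snd q < n" "snd r < n"
    "fst p \<le> fst q" "fst q \<le> fst r"
  shows "\<exists>u v. equidistant n {p,q,r} u v"
proof -
  obtain x1 j1 x2 j2 x3 j3 where pqr: "p = (x1,j1)" "q = (x2,j2)" "r = (x3,j3)"
    by (cases p, cases q, cases r)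
  have j: "j1 < n" "j2 < n" "j3 < n" and x: "x1 \<le> x2" "x2 \<le> x3" using assms pqr by auto
  have half: "cdist n j1 j2 \<le> int m" "cdist n j2 j3 \<le> int m"
    using cdist_le_half[OF assms(1)] j by auto
  consider "x1 = x3" | "x1 < x2" "cdist n j2 j3 < int m" | "x2 < x3" "cdist n j1 j2 < int m"
    | "x1 < x3" "x1 < x2 \<Longrightarrow> cdist n j2 j3 = int m" "x2 < x3 \<Longrightarrow> cdist n j1 j2 = int m"
    using half x by linarith
  then show ?thesis
  proof cases
    case 1
    then show ?thesis using equidistant_column[of n "{p,q,r}" x1] x pqr assms(1,2) by auto
  next
    case 2
    then show ?thesis using equidistant_three_close_right[OF assms(1,2) j] x pqr by simp
  next
    case 3
    then show ?thesis using equidistant_three_close_left[OF assms(1,2) j] x pqr by simp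
  next
    case 4
    then show ?thesis using equidistant_three_far[OF assms(1,2) j x] pqr by simp
  qed
qed

lemma equidistant_three:
  assumes "n = 2*m" "m \<ge> 2" "snd p < n" "snd q < n" "snd r < n"
  shows "\<exists>u v. equidistant n {p,q,r} u v"
proof -
  have "{p,q,r} = {q,p,r}" "{p,q,r} = {p,r,q}" "{p,q,r} = {q,r,p}" "{p,q,r} = {r,p,q}" "{p,q,r} = {r,q,p}"
    by auto
  moreover
  have "fst p \<le> fst q \<and> fst q \<le> fst r \<or> fst q \<le> fst p \<and> fst p \<le> fst r \<or>
        fst p \<le> fst r \<and> fst r \<le> fst q \<or> fst q \<le> fst r \<and> fst r \<le> fst p \<or>
        fst r \<le> fst p \<and> fst p \<le> fst q \<or> fst r \<le> fst q \<and> fst q \<le> fst p" by linarith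
  ultimately show ?thesis using equidistant_three_sorted[OF assms(1,2)] assms(3-5) by metis
qed

theorem card_resolving_ge_4:
  assumes "n = 2*m" "m \<ge> 2" "finite W" "resolving_set (PC_V n) (PC_adj n) W"
  shows "card W \<ge> 4"
proof (rule ccontr)
  have n3: "n \<ge> 3" using assms by auto
  assume "\<not> card W \<ge> 4"
  moreover have "W \<subseteq> PC_V n" "(0,0) \<in> PC_V n"
    using assms n3 unfolding resolving_set_def PC_V_iff by auto
  ultimately obtain xs where xs: "length xs = 3" "set xs \<subseteq> PC_V n" "W \<subseteq> set xs"
    using cover_by_list[OF assms(3), of 3 "PC_V n" "(0,0)"] by fastforce
  then obtain p q r where pqr: "xs = [p,q,r]" by (auto simp: numeral_3_eq_3 length_Suc_conv)
  then have "snd p < n" "snd q < n" "snd r < n" using xs(2) by (auto simp: PC_V_iff)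
  then obtain u v where "equidistant n {p,q,r} u v" using equidistant_three[OF assms(1,2)] by blast
  then show False using equidistant_not_resolving[OF n3] xs(3) pqr assms(4) by auto
qed

theorem proposition7:
  fixes n :: nat
  assumes "n \<ge> 3"
  shows "(odd n \<longrightarrow> metric_dim (PC_V n) (PC_adj n) = 3 \<and>
            metric_basis (PC_V n) (PC_adj n) {(0, 0), (0, (n - 1) div 2), (1, 0)}) \<and>
         (even n \<longrightarrow> metric_dim (PC_V n) (PC_adj n) = 4 \<and>
            metric_basis (PC_V n) (PC_adj n) {(0, 0), (0, n div 2), (0, 1), (1, 0)})"
proof (intro conjI impI)
  assume "odd n"
  define m where "m = (n - 1) div 2"
  have nm: "n = 2*m+1" "m \<ge> 1" using \<open>odd n\<close> assms unfolding m_def by (auto elim: oddE)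
  have "card {(0::int, 0::nat), (0, m), (1, 0)} = 3" using nm by auto
  from metric_dim_eqI[OF _ odd_basis_resolving[OF nm] this] card_resolving_ge_3[OF assms]
  show "metric_dim (PC_V n) (PC_adj n) = 3"
    "metric_basis (PC_V n) (PC_adj n) {(0, 0), (0, (n - 1) div 2), (1, 0)}"
    unfolding m_def by (auto simp: numeral_eq_enat)
next
  assume "even n"
  define m where "m = n div 2"
  have nm: "n = 2*m" "m \<ge> 2" using \<open>even n\<close> assms unfolding m_def by auto
  have "card {(0::int, 0::nat), (0, m), (0, 1), (1, 0)} = 4" using nm by auto
  from metric_dim_eqI[OF _ even_basis_resolving[OF nm] this] card_resolving_ge_4[OF nm]
  show "metric_dim (PC_V n) (PC_adj n) = 4"
    "metric_basis (PC_V n) (PC_adj n) {(0, 0), (0, n div 2), (0, 1), (1, 0)}"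
    unfolding m_def by (auto simp: numeral_eq_enat)
qed

end
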